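(* Let $\bar d$ be the distance for which the approximation cost is equal to the retrieval cost, i.e.,~$\bar d=\inf \{d: h(d)=C_r\}$. Let $\mathcal B_{\bar d}(x)$ be a ball of radius $\bar d$ centered in $x$. Any cache state $\mathcal S=\{y_1, \dots y_k\}$, such that the balls $\mathcal B_{\bar d}(y_h)$ are contained in $\mathcal X$ and have intersections with null volume, is optimal.
   Context: $\mathcal X$ is a bounded subset of $\mathbb R^p$, the cache holds $k$ objects, $C_a(x,y)=h(\|x-y\|)$ with $h$ non-decreasing and non-negative, $C_r>0$ is the retrieval cost, and $C(x,\mathcal S)=\min(\inf_{y\in\mathcal S}C_a(x,y),C_r)$. Requests have constant spatial density $\lambda$ over $\mathcal X$; the expected cost of state $\mathcal S$ is $\bar C(\mathcal S)=\int_{\mathcal X}\lambda C(x,\mathcal S)\,dx$. A state is optimal if it minimizes $\bar C(\mathcal S)$. For any state, $\bar C(\mathcal S)\ge\lambda kF(|\mathcal X|/k)$ where $F(v)=\int_{\mathcal B(y,v)}\min(C_a(x,y),C_r)\,dx$ and $\mathcal B(y,v)$ is the ball of volume $v$ centered in $y$; the corollary identifies states achieving this bound. *)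

theory Defs
  imports "HOL-Analysis.Analysis"
begin

text \<open>Cost of serving request x from cache state S (C(x,S) = min(inf_y h(|x-y|), C_r)).
  The infimum is taken in ereal so that the empty state gives cost C_r.\<close>
definition req_cost :: "(real \<Rightarrow> real) \<Rightarrow> real \<Rightarrow> 'a::euclidean_space set \<Rightarrow> 'a \<Rightarrow> real" where
  "req_cost h Cr S x = real_of_ereal (min (INF y\<in>S. ereal (h (dist x y))) (ereal Cr))"

definition exp_cost :: "(real \<Rightarrow> real) \<Rightarrow> real \<Rightarrow> real \<Rightarrow> 'a::euclidean_space set \<Rightarrow> 'a set \<Rightarrow> real" where
  "exp_cost h Cr lam X S = (LINT x:X|lebesgue. lam * req_cost h Cr S x)"

definition cache_state :: "'a set \<Rightarrow> nat \<Rightarrow> 'a set \<Rightarrow> bool" where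
  "cache_state X k S \<longleftrightarrow> finite S \<and> card S = k \<and> S \<subseteq> X"

definition optimal_state :: "(real \<Rightarrow> real) \<Rightarrow> real \<Rightarrow> real \<Rightarrow> 'a::euclidean_space set \<Rightarrow> nat \<Rightarrow> 'a set \<Rightarrow> bool" where
  "optimal_state h Cr lam X k S \<longleftrightarrow> cache_state X k S \<and>
     (\<forall>S'. cache_state X k S' \<longrightarrow> exp_cost h Cr lam X S \<le> exp_cost h Cr lam X S')"

text \<open>dbar = inf {d : h(d) = C_r}, in the extended reals (inf of the empty set is +infinity).\<close>
definition dbar :: "(real \<Rightarrow> real) \<Rightarrow> real \<Rightarrow> ereal" where
  "dbar h Cr = Inf {ereal d | d. 0 \<le> d \<and> h d = Cr}"

text \<open>Ball with extended-real radius (radius +infinity gives the whole space).\<close>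
definition ball_ext :: "'a::metric_space \<Rightarrow> ereal \<Rightarrow> 'a set" where
  "ball_ext y r = {x. ereal (dist y x) < r}"

end

theory Submission
  imports Defs
begin

text \<open>
  Let \<open>\<sigma>(z) = max 0 (C\<^sub>r - h |z|)\<close> (\<open>approx_saving\<close>) be what a cached object
  at offset \<open>z\<close> from a request saves over retrieving it.  A request at \<open>x\<close> costs
  \<open>C\<^sub>r - max\<^sub>y \<sigma>(x - y)\<close>, which is at least \<open>C\<^sub>r - \<Sum>\<^sub>y \<sigma>(x - y)\<close>.  Integrating
  over X and using the translation invariance of Lebesgue measure, every state of k objects
  costs at least \<open>\<lambda> (C\<^sub>r |X| - k \<integral>\<sigma>)\<close>.  As \<sigma> vanishes outside the closed ball of
  radius \<open>dbar\<close>, for a state whose balls lie in X and overlap only in null sets almost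
  every request has at most one nonzero saving, and no saving is lost outside X; so both
  inequalities are equalities and the state attains the bound.
\<close>

lemma INF_ereal_eq_Min:
  assumes "finite S" "S \<noteq> {}"
  shows "(INF y\<in>S. ereal (g y)) = ereal (MIN y\<in>S. g y)"
proof -
  have "ereal (MIN y\<in>S. g y) = Min (ereal ` g ` S)"
    using assms by (intro mono_Min_commute) (auto simp: mono_def)
  also have "\<dots> = (INF y\<in>S. ereal (g y))"
    using assms by (simp add: Min_Inf image_image)
  finally show ?thesis ..
qed

lemma lebesgue_translation:
  fixes f :: "'a::euclidean_space \<Rightarrow> 'b::{banach, second_countable_topology}"
  assumes [measurable]: "f \<in> borel_measurable borel"
  shows integrable_lebesgue_translate: "integrable lebesgue (\<lambda>x. f (x - y)) \<longleftrightarrow> integrable lebesgue f"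
    and integral_lebesgue_translate: "integral\<^sup>L lebesgue (\<lambda>x. f (x - y)) = integral\<^sup>L lebesgue f"
proof -
  have shift: "(\<lambda>x. f (x - y)) = (\<lambda>x. f (- y + x))"
    by simp
  have "integrable lebesgue (\<lambda>x. f (x - y)) \<longleftrightarrow> integrable (distr lborel borel ((+) (- y))) f"
    unfolding shift by (subst integrable_distr_eq) (auto simp: integrable_completion)
  then show "integrable lebesgue (\<lambda>x. f (x - y)) \<longleftrightarrow> integrable lebesgue f"
    by (simp add: lborel_distr_plus integrable_completion)
  have "integral\<^sup>L lebesgue (\<lambda>x. f (x - y)) = integral\<^sup>L (distr lborel borel ((+) (- y))) f"
    unfolding shift by (subst integral_distr) (auto simp: integral_completion)
  then show "integral\<^sup>L lebesgue (\<lambda>x. f (x - y)) = integral\<^sup>L lebesgue f"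
    by (simp add: lborel_distr_plus integral_completion)
qed

lemma set_integrable_bounded:
  fixes f :: "'a \<Rightarrow> real"
  assumes "A \<in> fmeasurable M" "f \<in> borel_measurable M"
    and "\<And>x. x \<in> A \<Longrightarrow> \<bar>f x\<bar> \<le> B"
  shows "set_integrable M A f"
proof (rule set_integrable_bound[where f = "\<lambda>_. B"])
  show "set_integrable M A (\<lambda>_. B)"
    using assms(1) by (simp add: set_integrable_def fmeasurable_def)
  show "set_borel_measurable M A f"
    using assms(1,2) by (simp add: set_borel_measurable_def)
  show "AE x in M. x \<in> A \<longrightarrow> norm (f x) \<le> norm B"
    using assms(3) by (auto intro!: AE_I2 order_trans[OF _ abs_ge_self])
qed

lemma set_integral_sum:
  fixes f :: "'i \<Rightarrow> 'a \<Rightarrow> real"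
  assumes "\<And>i. i \<in> I \<Longrightarrow> set_integrable M A (f i)"
  shows "set_integrable M A (\<lambda>x. \<Sum>i\<in>I. f i x)"
    and "(LINT x:A|M. (\<Sum>i\<in>I. f i x)) = (\<Sum>i\<in>I. LINT x:A|M. f i x)"
  using assms unfolding set_integrable_def set_lebesgue_integral_def
  by (simp_all add: sum_distrib_left Bochner_Integration.integral_sum)

lemma AE_not_in_sphere: "AE x in lebesgue. x \<notin> sphere (y::'a::euclidean_space) r"
  by (rule AE_not_in) (simp add: negligible_iff_null_sets[symmetric] negligible_sphere)

lemma ball_ext_ereal [simp]: "ball_ext y (ereal r) = ball y r"
  by (auto simp: ball_ext_def)

lemma ball_ext_PInf [simp]: "ball_ext y \<infinity> = UNIV"
  by (auto simp: ball_ext_def)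

lemma dbar_nonneg: "0 \<le> dbar h Cr"
  unfolding dbar_def by (auto intro!: Inf_greatest)

definition approx_saving :: "(real \<Rightarrow> real) \<Rightarrow> real \<Rightarrow> 'a::real_normed_vector \<Rightarrow> real" where
  "approx_saving h Cr z = max 0 (Cr - h (norm z))"

lemma approx_saving_nonneg: "0 \<le> approx_saving h Cr z"
  by (simp add: approx_saving_def)

lemma req_cost_eq_Min:
  assumes "finite S" "S \<noteq> {}"
  shows "req_cost h Cr S x = (MIN y\<in>S. Cr - approx_saving h Cr (x - y))"
proof -
  have "req_cost h Cr S x = min (MIN y\<in>S. h (dist x y)) Cr"
    unfolding req_cost_def INF_ereal_eq_Min[OF assms] by (simp add: min_def)
  also have "\<dots> = (MIN y\<in>S. min (h (dist x y)) Cr)"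
    using assms by (subst Min.hom_commute[where h = "\<lambda>m. min m Cr"])
      (auto simp: image_image min.left_commute min.assoc)
  also have "\<dots> = (MIN y\<in>S. Cr - approx_saving h Cr (x - y))"
    by (intro arg_cong[where f = Min] image_cong) (auto simp: approx_saving_def dist_norm)
  finally show ?thesis .
qed

lemma req_cost_ge_sum_approx_saving:
  assumes "finite S" "S \<noteq> {}"
  shows "Cr - (\<Sum>y\<in>S. approx_saving h Cr (x - y)) \<le> req_cost h Cr S x"
  unfolding req_cost_eq_Min[OF assms] using assms
  by (auto intro!: member_le_sum approx_saving_nonneg)

lemma req_cost_eq_sum_approx_saving:
  assumes "finite S" "S \<noteq> {}"
    and unique: "\<And>y y'. y \<in> S \<Longrightarrow> y' \<in> S \<Longrightarrow> approx_saving h Cr (x - y) \<noteq> 0 \<Longrightarrow>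
      approx_saving h Cr (x - y') \<noteq> 0 \<Longrightarrow> y = y'"
  shows "req_cost h Cr S x = Cr - (\<Sum>y\<in>S. approx_saving h Cr (x - y))"
proof -
  let ?s = "\<lambda>y. approx_saving h Cr (x - y)"
  obtain y1 where "y1 \<in> S" and y1: "?s y1 = (\<Sum>y\<in>S. ?s y)"
  proof (cases "\<exists>y1\<in>S. ?s y1 \<noteq> 0")
    case True
    then obtain y1 where "y1 \<in> S" "?s y1 \<noteq> 0" by blast
    moreover have "(\<Sum>y\<in>S. ?s y) = (\<Sum>y\<in>{y1}. ?s y)"
      using calculation unique assms(1) by (intro sum.mono_neutral_right) auto
    ultimately show ?thesis using that by simp
  next
    case False
    then show ?thesis using that assms(2) by force
  qed
  have "Cr - (\<Sum>y\<in>S. ?s y) \<le> Cr - ?s y" if "y \<in> S" for y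
    using that assms(1) by (simp add: member_le_sum[where f = ?s] approx_saving_nonneg)
  then show ?thesis
    unfolding req_cost_eq_Min[OF assms(1,2)] using \<open>y1 \<in> S\<close> assms(1)
    by (intro Min_eqI) (auto simp: y1[symmetric])
qed

context
  fixes h :: "real \<Rightarrow> real" and Cr :: real
  assumes h_mono: "mono_on {0..} h"
begin

lemma borel_measurable_approx_saving [measurable]:
  "approx_saving h Cr \<in> borel_measurable (borel :: 'a::real_normed_vector measure)"
proof -
  have "mono (\<lambda>d. h (max 0 d))"
    by (intro monoI mono_onD[OF h_mono]) auto
  then have [measurable]: "(\<lambda>d. h (max 0 d)) \<in> borel_measurable borel"
    by (rule borel_measurable_mono)
  have "approx_saving h Cr = (\<lambda>z::'a. max 0 (Cr - h (max 0 (norm z))))"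
    by (simp add: approx_saving_def fun_eq_iff)
  then show ?thesis
    by (simp only:) measurable
qed

lemma approx_saving_le: "approx_saving h Cr z \<le> max 0 (Cr - h 0)"
  using mono_onD[OF h_mono, of 0 "norm z"] by (auto simp: approx_saving_def)

lemma approx_saving_eq_0:
  assumes "dbar h Cr < ereal (norm z)"
  shows "approx_saving h Cr z = 0"
proof -
  obtain d where "0 \<le> d" "h d = Cr" "d < norm z"
    using assms by (auto simp: dbar_def Inf_less_iff)
  then have "Cr \<le> h (norm z)"
    using mono_onD[OF h_mono, of d "norm z"] by auto
  then show ?thesis
    by (simp add: approx_saving_def)
qed

lemma req_cost_bounds:
  assumes "finite S" "S \<noteq> {}"
  shows "min (h 0) Cr \<le> req_cost h Cr S x" "req_cost h Cr S x \<le> Cr"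
proof -
  have "min (h 0) Cr \<le> Cr - approx_saving h Cr (x - y)" for y
    using approx_saving_le[of "x - y"] by linarith
  then show "min (h 0) Cr \<le> req_cost h Cr S x"
    using assms by (simp add: req_cost_eq_Min)
  show "req_cost h Cr S x \<le> Cr"
    using assms approx_saving_nonneg by (auto simp: req_cost_eq_Min Min_le_iff)
qed

lemma borel_measurable_req_cost:
  assumes "finite S" "S \<noteq> {}"
  shows "req_cost h Cr S \<in> borel_measurable (borel :: 'a::euclidean_space measure)"
  unfolding req_cost_eq_Min[OF assms, abs_def] using assms(1) by measurable

lemma integrable_approx_saving:
  assumes "dbar h Cr \<noteq> \<infinity>"
  shows "integrable lebesgue (approx_saving h Cr :: 'a::euclidean_space \<Rightarrow> real)"
proof -
  obtain r where r: "dbar h Cr < ereal r"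
    using assms less_PInf_Ex_of_nat by blast
  let ?B = "max 0 (Cr - h 0)"
  show ?thesis
  proof (rule Bochner_Integration.integrable_bound[where f = "\<lambda>x. ?B * indicator (cball 0 r) x"])
    show "integrable lebesgue (\<lambda>x::'a. ?B * indicator (cball 0 r) x)"
      using lmeasurable_cball[of "0::'a" r]
      by (intro integrable_mult_right integrable_real_indicator) (auto simp: fmeasurable_def)
    show "approx_saving h Cr \<in> borel_measurable lebesgue"
      by (simp add: measurable_completion)
    have "norm (approx_saving h Cr x) \<le> norm (?B * indicator (cball 0 r) x)" for x :: 'a
    proof (cases "x \<in> cball 0 r")
      case True
      then show ?thesis
        using approx_saving_le[of x] approx_saving_nonneg[of h Cr x] by simp
    next
      case False
      then have "dbar h Cr < ereal (norm x)"
        using r by (simp add: less_trans)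
      then show ?thesis
        by (simp add: approx_saving_eq_0)
    qed
    then show "AE x in lebesgue.
        norm (approx_saving h Cr (x::'a)) \<le> norm (?B * indicator (cball 0 r) x)"
      by simp
  qed
qed

lemma set_integrable_approx_saving:
  assumes "X \<in> fmeasurable lebesgue"
  shows "set_integrable lebesgue X (\<lambda>x::'a::euclidean_space. approx_saving h Cr (x - y))"
proof (rule set_integrable_bounded[OF assms])
  show "(\<lambda>x::'a. approx_saving h Cr (x - y)) \<in> borel_measurable lebesgue"
    by (simp add: measurable_completion)
  show "\<bar>approx_saving h Cr (x - y)\<bar> \<le> max 0 (Cr - h 0)" for x :: 'a
    using approx_saving_le[of "x - y"] approx_saving_nonneg[of h Cr "x - y"] by simp
qed

lemma set_integrable_req_cost:
  assumes "X \<in> fmeasurable lebesgue" "finite T" "T \<noteq> {}"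
  shows "set_integrable lebesgue X (req_cost h Cr (T :: 'a::euclidean_space set))"
proof (rule set_integrable_bounded[OF assms(1)])
  show "req_cost h Cr T \<in> borel_measurable lebesgue"
    using borel_measurable_req_cost[OF assms(2,3)] by (simp add: measurable_completion)
  show "\<bar>req_cost h Cr T x\<bar> \<le> \<bar>h 0\<bar> + \<bar>Cr\<bar>" for x
    using req_cost_bounds[OF assms(2,3), of x] by (auto simp: min_def abs_le_iff split: if_splits)
qed

lemma set_integral_retrieval_minus_savings:
  assumes X: "X \<in> fmeasurable lebesgue" and "finite T"
  shows "set_integrable lebesgue X (\<lambda>x. Cr - (\<Sum>y\<in>T. approx_saving h Cr (x - y)))"
    and "(LINT x:X|lebesgue. Cr - (\<Sum>y\<in>T. approx_saving h Cr (x - y))) =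
      Cr * measure lebesgue X - (\<Sum>y\<in>T. LINT x:X|lebesgue. approx_saving h Cr (x - y))"
proof -
  have const: "set_integrable lebesgue X (\<lambda>_::'a. Cr)"
    using X by (rule set_integrable_bounded) auto
  note savings = set_integral_sum[OF set_integrable_approx_saving[OF X]]
  show "set_integrable lebesgue X (\<lambda>x. Cr - (\<Sum>y\<in>T. approx_saving h Cr (x - y)))"
    using const savings(1) by (rule set_integral_diff)
  have "(LINT x:X|lebesgue. Cr) = Cr * measure lebesgue X"
    using X by (subst set_integral_const) (auto simp: fmeasurable_def)
  then show "(LINT x:X|lebesgue. Cr - (\<Sum>y\<in>T. approx_saving h Cr (x - y))) =
      Cr * measure lebesgue X - (\<Sum>y\<in>T. LINT x:X|lebesgue. approx_saving h Cr (x - y))"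
    by (simp add: set_integral_diff[OF const savings(1)] savings(2))
qed

lemma exp_cost_ge_savings:
  assumes X: "X \<in> fmeasurable lebesgue" and "0 \<le> lam" "finite T" "T \<noteq> {}"
  shows "lam * (Cr * measure lebesgue X - (\<Sum>y\<in>T. LINT x:X|lebesgue. approx_saving h Cr (x - y)))
    \<le> exp_cost h Cr lam X T"
proof -
  have "(LINT x:X|lebesgue. Cr - (\<Sum>y\<in>T. approx_saving h Cr (x - y))) \<le>
      (LINT x:X|lebesgue. req_cost h Cr T x)"
    by (rule set_integral_mono[OF set_integral_retrieval_minus_savings(1)[OF X \<open>finite T\<close>]
          set_integrable_req_cost[OF X assms(3,4)] req_cost_ge_sum_approx_saving[OF assms(3,4)]])
  then show ?thesis
    unfolding exp_cost_def set_integral_retrieval_minus_savings(2)[OF X \<open>finite T\<close>]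
    using \<open>0 \<le> lam\<close> by (simp add: mult_left_mono)
qed

lemma exp_cost_eq_savings:
  assumes X: "X \<in> fmeasurable lebesgue" and "finite T" "T \<noteq> {}"
    and unique: "AE x in lebesgue. \<forall>y\<in>T. \<forall>y'\<in>T.
      approx_saving h Cr (x - y) \<noteq> 0 \<longrightarrow> approx_saving h Cr (x - y') \<noteq> 0 \<longrightarrow> y = y'"
  shows "exp_cost h Cr lam X T =
    lam * (Cr * measure lebesgue X - (\<Sum>y\<in>T. LINT x:X|lebesgue. approx_saving h Cr (x - y)))"
proof -
  have "AE x in lebesgue. req_cost h Cr T x = Cr - (\<Sum>y\<in>T. approx_saving h Cr (x - y))"
    using unique by eventually_elim (rule req_cost_eq_sum_approx_saving[OF assms(2,3)], blast)
  then have "(LINT x:X|lebesgue. req_cost h Cr T x) =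
      (LINT x:X|lebesgue. Cr - (\<Sum>y\<in>T. approx_saving h Cr (x - y)))"
    using X borel_measurable_req_cost[OF assms(2,3)] assms(2)
    by (intro set_lebesgue_integral_cong_AE)
      (auto simp: measurable_completion elim: eventually_mono)
  then show ?thesis
    unfolding exp_cost_def by (simp add: set_integral_retrieval_minus_savings(2)[OF X \<open>finite T\<close>])
qed

lemma AE_approx_saving_support:
  assumes "dbar h Cr = ereal r"
  shows "AE x in lebesgue. approx_saving h Cr (x - y) \<noteq> 0 \<longrightarrow> x \<in> ball (y::'a::euclidean_space) r"
  using AE_not_in_sphere[of y r]
proof eventually_elim
  case (elim x)
  show ?case
  proof (rule impI, rule ccontr)
    assume "approx_saving h Cr (x - y) \<noteq> 0" "x \<notin> ball y r"
    then have "r < norm (x - y)"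
      using elim by (auto simp: dist_norm norm_minus_commute)
    then show False
      using approx_saving_eq_0 assms \<open>approx_saving h Cr (x - y) \<noteq> 0\<close> by auto
  qed
qed

lemma AE_approx_saving_unique:
  fixes S :: "'a::euclidean_space set"
  assumes "dbar h Cr = ereal r" "finite S"
    and disjoint: "\<And>y y'. y \<in> S \<Longrightarrow> y' \<in> S \<Longrightarrow> y \<noteq> y' \<Longrightarrow>
      ball y r \<inter> ball y' r \<in> null_sets lebesgue"
  shows "AE x in lebesgue. \<forall>y\<in>S. \<forall>y'\<in>S.
    approx_saving h Cr (x - y) \<noteq> 0 \<longrightarrow> approx_saving h Cr (x - y') \<noteq> 0 \<longrightarrow> y = y'"
proof -
  have pair: "AE x in lebesgue. y \<noteq> y' \<longrightarrow> x \<notin> ball y r \<inter> ball y' r"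
    if "y \<in> S" "y' \<in> S" for y y'
    using AE_not_in[OF disjoint[OF that]] by (cases "y = y'") simp_all
  have "AE x in lebesgue. \<forall>y\<in>S. approx_saving h Cr (x - y) \<noteq> 0 \<longrightarrow> x \<in> ball y r"
    using assms(2) AE_approx_saving_support[OF assms(1)] by (intro AE_finite_allI) auto
  moreover have "AE x in lebesgue. \<forall>y\<in>S. \<forall>y'\<in>S. y \<noteq> y' \<longrightarrow> x \<notin> ball y r \<inter> ball y' r"
    using assms(2) pair by (intro AE_finite_allI) simp_all
  ultimately show ?thesis
    by eventually_elim blast
qed

lemma set_integral_approx_saving_le:
  fixes X :: "'a::euclidean_space set"
  assumes "dbar h Cr \<noteq> \<infinity>" "X \<in> sets lebesgue"
  shows "(LINT x:X|lebesgue. approx_saving h Cr (x - y))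
    \<le> integral\<^sup>L lebesgue (approx_saving h Cr :: 'a \<Rightarrow> real)"
proof -
  have int: "integrable lebesgue (\<lambda>x::'a. approx_saving h Cr (x - y))"
    using integrable_approx_saving[OF assms(1)] by (simp add: integrable_lebesgue_translate)
  have "(LINT x:X|lebesgue. approx_saving h Cr (x - y))
      \<le> (LINT x|lebesgue. approx_saving h Cr (x - y))"
    unfolding set_lebesgue_integral_def using int assms(2) approx_saving_nonneg
    by (intro integral_mono integrable_mult_indicator) (auto simp: indicator_def)
  then show ?thesis
    by (simp add: integral_lebesgue_translate)
qed

lemma set_integral_approx_saving_eq:
  fixes X :: "'a::euclidean_space set"
  assumes "dbar h Cr = ereal r" "ball y r \<subseteq> X" "X \<in> sets lebesgue"
  shows "(LINT x:X|lebesgue. approx_saving h Cr (x - y))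
    = integral\<^sup>L lebesgue (approx_saving h Cr :: 'a \<Rightarrow> real)"
proof -
  have [measurable]: "X \<in> sets lebesgue"
      "(\<lambda>x. approx_saving h Cr (x - y)) \<in> borel_measurable lebesgue"
    using assms(3) by (simp_all add: measurable_completion)
  have "AE x in lebesgue. indicator X x *\<^sub>R approx_saving h Cr (x - y) = approx_saving h Cr (x - y)"
    using AE_approx_saving_support[OF assms(1), of y] by eventually_elim (use assms(2) in auto)
  then have "(LINT x:X|lebesgue. approx_saving h Cr (x - y))
      = (LINT x|lebesgue. approx_saving h Cr (x - y))"
    unfolding set_lebesgue_integral_def by (intro integral_cong_AE) simp_all
  then show ?thesis
    by (simp add: integral_lebesgue_translate)
qed

lemma exp_cost_lower_bound:
  fixes T :: "'a::euclidean_space set"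
  assumes "dbar h Cr \<noteq> \<infinity>" "X \<in> fmeasurable lebesgue" "0 \<le> lam" "finite T" "T \<noteq> {}"
  shows "lam * (Cr * measure lebesgue X - card T * integral\<^sup>L lebesgue (approx_saving h Cr :: 'a \<Rightarrow> real))
    \<le> exp_cost h Cr lam X T"
proof -
  have "(\<Sum>y\<in>T. LINT x:X|lebesgue. approx_saving h Cr (x - y))
      \<le> card T * integral\<^sup>L lebesgue (approx_saving h Cr :: 'a \<Rightarrow> real)"
    using set_integral_approx_saving_le[OF assms(1) fmeasurableD[OF assms(2)]]
    by (intro sum_bounded_above) auto
  then have "lam * (Cr * measure lebesgue X - card T * integral\<^sup>L lebesgue (approx_saving h Cr :: 'a \<Rightarrow> real))
      \<le> lam * (Cr * measure lebesgue X - (\<Sum>y\<in>T. LINT x:X|lebesgue. approx_saving h Cr (x - y)))"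
    using assms(3) by (intro mult_left_mono) auto
  also have "\<dots> \<le> exp_cost h Cr lam X T"
    using assms(2-) by (rule exp_cost_ge_savings)
  finally show ?thesis .
qed

lemma exp_cost_eq_lower_bound:
  fixes S :: "'a::euclidean_space set"
  assumes r: "dbar h Cr = ereal r" and X: "X \<in> fmeasurable lebesgue" and "finite S" "S \<noteq> {}"
    and inside: "\<And>y. y \<in> S \<Longrightarrow> ball y r \<subseteq> X"
    and disjoint: "\<And>y y'. y \<in> S \<Longrightarrow> y' \<in> S \<Longrightarrow> y \<noteq> y' \<Longrightarrow>
      ball y r \<inter> ball y' r \<in> null_sets lebesgue"
  shows "exp_cost h Cr lam X S =
    lam * (Cr * measure lebesgue X - card S * integral\<^sup>L lebesgue (approx_saving h Cr :: 'a \<Rightarrow> real))"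
proof -
  have "(\<Sum>y\<in>S. LINT x:X|lebesgue. approx_saving h Cr (x - y))
      = (\<Sum>y\<in>S. integral\<^sup>L lebesgue (approx_saving h Cr :: 'a \<Rightarrow> real))"
    using set_integral_approx_saving_eq[OF r inside fmeasurableD[OF X]] by simp
  then show ?thesis
    using AE_approx_saving_unique[OF r \<open>finite S\<close> disjoint]
    by (simp add: exp_cost_eq_savings[OF X \<open>finite S\<close> \<open>S \<noteq> {}\<close>])
qed

end

theorem corollary1:
  fixes X :: "'a::euclidean_space set" and k :: nat and h :: "real \<Rightarrow> real"
    and Cr lam :: real and S :: "'a set"
  assumes "bounded X" and "X \<in> sets lebesgue"
    and "mono_on {0..} h" and "\<And>d. 0 \<le> d \<Longrightarrow> 0 \<le> h d"
    and "Cr > 0" and "lam > 0"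
    and "cache_state X k S"
    and "\<And>y. y \<in> S \<Longrightarrow> ball_ext y (dbar h Cr) \<subseteq> X"
    and "\<And>y y'. y \<in> S \<Longrightarrow> y' \<in> S \<Longrightarrow> y \<noteq> y' \<Longrightarrow>
           emeasure lebesgue (ball_ext y (dbar h Cr) \<inter> ball_ext y' (dbar h Cr)) = 0"
  shows "optimal_state h Cr lam X k S"
proof (cases "S = {}")
  case True
  then show ?thesis
    using assms(7) by (auto simp: optimal_state_def cache_state_def)
next
  case False
  then have "dbar h Cr \<noteq> \<infinity>"
    using assms(1,8) bounded_subset not_bounded_UNIV by force
  then obtain r where r: "dbar h Cr = ereal r"
    using dbar_nonneg[of h Cr] by (cases "dbar h Cr") auto
  have X: "X \<in> fmeasurable lebesgue"
    using assms(1,2) by (rule bounded_set_imp_lmeasurable)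
  have S: "finite S" "card S = k"
    using assms(7) by (auto simp: cache_state_def)
  have "ball y r \<inter> ball y' r \<in> null_sets lebesgue" if "y \<in> S" "y' \<in> S" "y \<noteq> y'" for y y'
    using assms(9)[OF that] r by (auto intro!: null_setsI simp del: emeasure_completion)
  then have cost_S: "exp_cost h Cr lam X S =
      lam * (Cr * measure lebesgue X - k * integral\<^sup>L lebesgue (approx_saving h Cr :: 'a \<Rightarrow> real))"
    using assms(8) r S by (simp add: exp_cost_eq_lower_bound[OF assms(3) r X S(1) False])
  have "exp_cost h Cr lam X S \<le> exp_cost h Cr lam X S'" if "cache_state X k S'" for S'
  proof -
    have "finite S'" "card S' = k" "S' \<noteq> {}"
      using that S False by (auto simp: cache_state_def)
    then show ?thesis
      unfolding cost_S using assms(6)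
      by (metis exp_cost_lower_bound[OF assms(3) \<open>dbar h Cr \<noteq> \<infinity>\<close> X] less_imp_le)
  qed
  then show ?thesis
    using assms(7) by (simp add: optimal_state_def)
qed

end
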